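(* The labelled rule $\Box_S$, with premise $\Gamma, A \leq \mathbf{m} \vdash \mathbf{j} \leq \Box \mathbf{m}, \Delta$ and conclusion $\Gamma \vdash \mathbf{j} \leq \Box A, \Delta$ (where $\mathbf{m}$ does not occur in the conclusion), is sound and invertible on the canonical extension $\mathbb{A}^\delta$ of any $\mathcal{L}$-algebra $\mathbb{A}$; i.e. validity of the premise is equivalent to validity of the conclusion, via the chain: uncurrying (using the side condition), the adjunction $\Diamond^{b}\mathbf{j}\leq\mathbf{m}$ iff $\mathbf{j}\leq\Box\mathbf{m}$, complete meet-generation giving $\Diamond^{b}\mathbf{j}\leq A$, and adjunction again giving $\mathbf{j}\leq\Box A$.
   Context: An $\mathcal{L}$-algebra is a bounded lattice with a finitely join-preserving $\Diamond$ and finitely meet-preserving $\Box$; its canonical extension $\mathbb{A}^\delta=(L^\delta,\Box^\pi,\Diamond^\sigma)$ is complete, with $\Box^\pi$ completely meet-preserving and hence having a left adjoint denoted $\Diamond^{b}$ ($\Diamond^{b}u\leq v$ iff $u\leq\Box v$). Nominals range over a completely join-generating subset and conominals over a completely meet-generating subset of $\mathbb{A}^\delta$. A sequent $\Gamma\vdash\Delta$ of inequalities (labelled formulas $\mathbf{j}\leq A$, $A\leq\mathbf{m}$ and pure structures $\mathbf{j}\leq\mathbf{T}$, $\mathbf{T}\leq\mathbf{m}$) is interpreted as $\forall\overline{p}\forall\overline{\mathbf{j}}\forall\overline{\mathbf{m}}(\bigwedge\Gamma\Rightarrow\bigvee\Delta)$. *)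

theory Defs
  imports Main
begin

definition L_algebra :: "('b::bounded_lattice \<Rightarrow> 'b) \<Rightarrow> ('b \<Rightarrow> 'b) \<Rightarrow> bool" where
  "L_algebra box dia \<longleftrightarrow>
     box top = top \<and> (\<forall>x y. box (inf x y) = inf (box x) (box y)) \<and>
     dia bot = bot \<and> (\<forall>x y. dia (sup x y) = sup (dia x) (dia y))"

definition closed_elems :: "('b \<Rightarrow> 'a::complete_lattice) \<Rightarrow> 'a set" where
  "closed_elems e = {Inf (e ` S) | S. True}"

definition open_elems :: "('b \<Rightarrow> 'a::complete_lattice) \<Rightarrow> 'a set" where
  "open_elems e = {Sup (e ` S) | S. True}"

definition canonical_extension :: "('b::bounded_lattice \<Rightarrow> 'a::complete_lattice) \<Rightarrow> bool" where
  "canonical_extension e \<longleftrightarrow>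
     inj e \<and> e top = top \<and> e bot = bot \<and>
     (\<forall>x y. e (inf x y) = inf (e x) (e y)) \<and> (\<forall>x y. e (sup x y) = sup (e x) (e y)) \<and>
     \<comment> \<open>density\<close>
     (\<forall>u. u = Sup {k \<in> closed_elems e. k \<le> u} \<and> u = Inf {w \<in> open_elems e. u \<le> w}) \<and>
     \<comment> \<open>compactness\<close>
     (\<forall>S T. Inf (e ` S) \<le> Sup (e ` T) \<longrightarrow>
        (\<exists>S' T'. finite S' \<and> finite T' \<and> S' \<subseteq> S \<and> T' \<subseteq> T \<and> Inf (e ` S') \<le> Sup (e ` T')))"

definition pi_ext :: "('b \<Rightarrow> 'a::complete_lattice) \<Rightarrow> ('b \<Rightarrow> 'b) \<Rightarrow> 'a \<Rightarrow> 'a" where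
  "pi_ext e f u = Inf {Sup {e (f a) | a. e a \<le> w} | w. w \<in> open_elems e \<and> u \<le> w}"

definition sigma_ext :: "('b \<Rightarrow> 'a::complete_lattice) \<Rightarrow> ('b \<Rightarrow> 'b) \<Rightarrow> 'a \<Rightarrow> 'a" where
  "sigma_ext e f u = Sup {Inf {e (f a) | a. k \<le> e a} | k. k \<in> closed_elems e \<and> k \<le> u}"

definition left_adj :: "('a::complete_lattice \<Rightarrow> 'a) \<Rightarrow> 'a \<Rightarrow> 'a" where
  "left_adj g u = Inf {v. u \<le> g v}"

definition join_generating :: "'a::complete_lattice set \<Rightarrow> bool" where
  "join_generating J \<longleftrightarrow> (\<forall>u. u = Sup {x \<in> J. x \<le> u})"

definition meet_generating :: "'a::complete_lattice set \<Rightarrow> bool" where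
  "meet_generating M \<longleftrightarrow> (\<forall>u. u = Inf {x \<in> M. u \<le> x})"

datatype trm =
    Prop nat | Nom nat | Conom nat | TTop | TBot
  | TMeet trm trm | TJoin trm trm | TBox trm | TDia trm
  | TDiaB trm   \<comment> \<open>black diamond: left adjoint of box, for pure structures\<close>

datatype ineq = Le trm trm

fun conoms :: "trm \<Rightarrow> nat set" where
  "conoms (Conom m) = {m}"
| "conoms (TMeet a b) = conoms a \<union> conoms b"
| "conoms (TJoin a b) = conoms a \<union> conoms b"
| "conoms (TBox a) = conoms a"
| "conoms (TDia a) = conoms a"
| "conoms (TDiaB a) = conoms a"
| "conoms _ = {}"

fun ineq_conoms :: "ineq \<Rightarrow> nat set" where
  "ineq_conoms (Le a b) = conoms a \<union> conoms b"

fun tval :: "('b::bounded_lattice \<Rightarrow> 'a::complete_lattice) \<Rightarrow> ('b \<Rightarrow> 'b) \<Rightarrow> ('b \<Rightarrow> 'b) \<Rightarrow>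
    (nat \<Rightarrow> 'a) \<Rightarrow> (nat \<Rightarrow> 'a) \<Rightarrow> (nat \<Rightarrow> 'a) \<Rightarrow> trm \<Rightarrow> 'a" where
  "tval e box dia v vj vm (Prop p) = v p"
| "tval e box dia v vj vm (Nom j) = vj j"
| "tval e box dia v vj vm (Conom m) = vm m"
| "tval e box dia v vj vm TTop = top"
| "tval e box dia v vj vm TBot = bot"
| "tval e box dia v vj vm (TMeet a b) = inf (tval e box dia v vj vm a) (tval e box dia v vj vm b)"
| "tval e box dia v vj vm (TJoin a b) = sup (tval e box dia v vj vm a) (tval e box dia v vj vm b)"
| "tval e box dia v vj vm (TBox a) = pi_ext e box (tval e box dia v vj vm a)"
| "tval e box dia v vj vm (TDia a) = sigma_ext e dia (tval e box dia v vj vm a)"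
| "tval e box dia v vj vm (TDiaB a) = left_adj (pi_ext e box) (tval e box dia v vj vm a)"

fun ival :: "('b::bounded_lattice \<Rightarrow> 'a::complete_lattice) \<Rightarrow> ('b \<Rightarrow> 'b) \<Rightarrow> ('b \<Rightarrow> 'b) \<Rightarrow>
    (nat \<Rightarrow> 'a) \<Rightarrow> (nat \<Rightarrow> 'a) \<Rightarrow> (nat \<Rightarrow> 'a) \<Rightarrow> ineq \<Rightarrow> bool" where
  "ival e box dia v vj vm (Le a b) \<longleftrightarrow> tval e box dia v vj vm a \<le> tval e box dia v vj vm b"

definition seq_valid :: "('b::bounded_lattice \<Rightarrow> 'a::complete_lattice) \<Rightarrow> ('b \<Rightarrow> 'b) \<Rightarrow> ('b \<Rightarrow> 'b) \<Rightarrow>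
    'a set \<Rightarrow> 'a set \<Rightarrow> ineq list \<Rightarrow> ineq list \<Rightarrow> bool" where
  "seq_valid e box dia J M \<Gamma> \<Delta> \<longleftrightarrow>
     (\<forall>v vj vm. (\<forall>i. vj i \<in> J) \<longrightarrow> (\<forall>i. vm i \<in> M) \<longrightarrow>
        (\<forall>g \<in> set \<Gamma>. ival e box dia v vj vm g) \<longrightarrow> (\<exists>d \<in> set \<Delta>. ival e box dia v vj vm d))"

end

theory Submission
  imports Defs
begin

text \<open>Since \<open>\<^bold>m\<close> is fresh, validity of the premise says: whenever \<open>\<Gamma>\<close> holds and \<open>\<Delta>\<close> fails,
  \<open>\<^bold>j \<le> \<box>\<^sup>\<pi> x\<close> for every \<open>x \<in> M\<close> above \<open>A\<close>. As \<open>M\<close> is meet-generating, the meet of these \<open>x\<close> is \<open>A\<close>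
  itself, so the premise is equivalent to \<open>\<^bold>j \<le> \<box>\<^sup>\<pi> A\<close> as soon as \<open>\<box>\<^sup>\<pi>\<close> is completely
  meet-preserving (equivalently, has the left adjoint \<open>\<diamondsuit>\<^sup>b\<close>). That \<open>\<box>\<^sup>\<pi>\<close> preserves arbitrary meets
  is the Gehrke--Harding argument: every closed element below \<open>\<box>\<^sup>\<pi> u\<close> for all \<open>u \<in> U\<close> generates
  a filter of \<open>L\<close> whose meet lies below \<open>\<Sqinter>U\<close>, and compactness turns this into an element of
  that filter below any open element above \<open>\<Sqinter>U\<close>.\<close>

lemma tval_fun_upd_conom:
  "m \<notin> conoms t \<Longrightarrow> tval e box dia v vj (vm(m := x)) t = tval e box dia v vj vm t"
  by (induction t) auto

lemma ival_fun_upd_conom: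
  "m \<notin> ineq_conoms g \<Longrightarrow> ival e box dia v vj (vm(m := x)) g = ival e box dia v vj vm g"
  by (cases g) (simp add: tval_fun_upd_conom)

lemma seq_valid_snoc_fresh_conom_iff:
  assumes "m \<notin> (\<Union>g \<in> set \<Gamma>. ineq_conoms g)"
    and "m \<notin> (\<Union>d \<in> set \<Delta>. ineq_conoms d)"
    and "m \<notin> conoms A"
  shows "seq_valid e box dia J M (\<Gamma> @ [Le A (Conom m)]) (\<phi> # \<Delta>) \<longleftrightarrow>
    (\<forall>v vj vm. (\<forall>i. vj i \<in> J) \<longrightarrow> (\<forall>i. vm i \<in> M) \<longrightarrow> (\<forall>g \<in> set \<Gamma>. ival e box dia v vj vm g) \<longrightarrow>
       (\<forall>x \<in> M. tval e box dia v vj vm A \<le> x \<longrightarrow> ival e box dia v vj (vm(m := x)) \<phi>)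
       \<or> (\<exists>d \<in> set \<Delta>. ival e box dia v vj vm d))"
    (is "?premise \<longleftrightarrow> ?uncurried")
proof
  assume premise: ?premise
  show ?uncurried
  proof (intro allI impI)
    fix v vj vm
    assume vj: "\<forall>i. vj i \<in> J" and vm: "\<forall>i. vm i \<in> M" and \<Gamma>: "\<forall>g \<in> set \<Gamma>. ival e box dia v vj vm g"
    have "ival e box dia v vj (vm(m := x)) \<phi> \<or> (\<exists>d \<in> set \<Delta>. ival e box dia v vj vm d)"
      if "x \<in> M" and "tval e box dia v vj vm A \<le> x" for x
    proof -
      have "\<forall>i. (vm(m := x)) i \<in> M"
        using vm \<open>x \<in> M\<close> by simp
      moreover have "\<forall>g \<in> set (\<Gamma> @ [Le A (Conom m)]). ival e box dia v vj (vm(m := x)) g"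
        using \<Gamma> \<open>tval e box dia v vj vm A \<le> x\<close> assms(1,3)
        by (auto simp: ival_fun_upd_conom tval_fun_upd_conom)
      ultimately have "\<exists>d \<in> set (\<phi> # \<Delta>). ival e box dia v vj (vm(m := x)) d"
        using premise vj unfolding seq_valid_def by blast
      then show ?thesis
        using assms(2) by (auto simp: ival_fun_upd_conom)
    qed
    then show "(\<forall>x \<in> M. tval e box dia v vj vm A \<le> x \<longrightarrow> ival e box dia v vj (vm(m := x)) \<phi>)
       \<or> (\<exists>d \<in> set \<Delta>. ival e box dia v vj vm d)"
      by blast
  qed
next
  assume uncurried: ?uncurried
  show ?premise
    unfolding seq_valid_def
  proof (intro allI impI)
    fix v vj vm
    assume "\<forall>i. vj i \<in> J" and vm: "\<forall>i. vm i \<in> M"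
      and \<Gamma>A: "\<forall>g \<in> set (\<Gamma> @ [Le A (Conom m)]). ival e box dia v vj vm g"
    with uncurried have "(\<forall>x \<in> M. tval e box dia v vj vm A \<le> x \<longrightarrow> ival e box dia v vj (vm(m := x)) \<phi>)
       \<or> (\<exists>d \<in> set \<Delta>. ival e box dia v vj vm d)"
      by simp
    then have "ival e box dia v vj (vm(m := vm m)) \<phi> \<or> (\<exists>d \<in> set \<Delta>. ival e box dia v vj vm d)"
      using vm \<Gamma>A by (auto dest: bspec[where x = "vm m"])
    then show "\<exists>d \<in> set (\<phi> # \<Delta>). ival e box dia v vj vm d"
      by simp
  qed
qed

lemma le_iff_forall_meet_generating_above:
  fixes g :: "'a::complete_lattice \<Rightarrow> 'a"
  assumes "meet_generating M" and "mono g" and "\<And>U. Inf (g ` U) \<le> g (Inf U)"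
  shows "y \<le> g a \<longleftrightarrow> (\<forall>x \<in> M. a \<le> x \<longrightarrow> y \<le> g x)"
proof
  assume "\<forall>x \<in> M. a \<le> x \<longrightarrow> y \<le> g x"
  then have "y \<le> Inf (g ` {x \<in> M. a \<le> x})"
    by (auto intro: INF_greatest)
  also have "\<dots> \<le> g (Inf {x \<in> M. a \<le> x})"
    by (rule assms(3))
  also have "Inf {x \<in> M. a \<le> x} = a"
    using assms(1) unfolding meet_generating_def by metis
  finally show "y \<le> g a" .
qed (use assms(2) in \<open>auto dest: monoD intro: order_trans\<close>)

lemma mono_if_preserves_inf:
  fixes f :: "'b::lattice \<Rightarrow> 'c::lattice"
  assumes "\<And>x y. f (inf x y) = inf (f x) (f y)"
  shows "mono f"
  by (rule monoI) (metis assms inf.absorb_iff1 le_infE)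

lemma canonical_extensionD:
  assumes "canonical_extension e"
  shows "e top = top" and "e bot = bot"
    and "e (inf x y) = inf (e x) (e y)" and "e (sup x y) = sup (e x) (e y)"
    and "u = Sup {k \<in> closed_elems e. k \<le> u}" and "u = Inf {w \<in> open_elems e. u \<le> w}"
  using assms unfolding canonical_extension_def by blast+

lemma canonical_extension_le_iff:
  assumes "canonical_extension e"
  shows "e a \<le> e b \<longleftrightarrow> a \<le> b"
proof
  assume "e a \<le> e b"
  then have "e (inf a b) = e a"
    using canonical_extensionD(3)[OF assms] by (simp add: inf.absorb1)
  then show "a \<le> b"
    using assms unfolding canonical_extension_def inj_def by (metis inf.orderI)
qed (use mono_if_preserves_inf[OF canonical_extensionD(3)[OF assms]] in \<open>auto dest: monoD\<close>)

lemma canonical_extension_compact_upper: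
  assumes "canonical_extension e" and "Inf (e ` S) \<le> Sup (e ` T)"
  obtains T' where "finite T'" "T' \<subseteq> T" "Inf (e ` S) \<le> Sup (e ` T')"
proof -
  obtain S' T' where "finite T'" "S' \<subseteq> S" "T' \<subseteq> T" "Inf (e ` S') \<le> Sup (e ` T')"
    using assms unfolding canonical_extension_def by metis
  moreover from \<open>S' \<subseteq> S\<close> have "Inf (e ` S) \<le> Inf (e ` S')"
    by (intro Inf_superset_mono image_mono)
  ultimately show thesis
    using that order_trans by blast
qed

lemma canonical_extension_compact_lower:
  assumes "canonical_extension e" and "Inf (e ` S) \<le> Sup (e ` T)"
  obtains S' where "finite S'" "S' \<subseteq> S" "Inf (e ` S') \<le> Sup (e ` T)"
proof -
  obtain S' T' where "finite S'" "S' \<subseteq> S" "T' \<subseteq> T" "Inf (e ` S') \<le> Sup (e ` T')"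
    using assms unfolding canonical_extension_def by metis
  moreover from \<open>T' \<subseteq> T\<close> have "Sup (e ` T') \<le> Sup (e ` T)"
    by (intro Sup_subset_mono image_mono)
  ultimately show thesis
    using that order_trans by blast
qed

lemma canonical_extension_Sup_finite:
  assumes "canonical_extension e" and "finite A"
  obtains b where "e b = Sup (e ` A)"
  using assms(2) that
proof (induction A arbitrary: thesis rule: finite_induct)
  case empty
  then show ?case using canonical_extensionD(2)[OF assms(1)] by simp
next
  case (insert a A)
  then show ?case using canonical_extensionD(4)[OF assms(1)] by (metis Sup_insert image_insert)
qed

lemma canonical_extension_Inf_finite_in:
  assumes "canonical_extension e" and "finite A" and "A \<subseteq> G"
    and "top \<in> G" and "\<And>a b. a \<in> G \<Longrightarrow> b \<in> G \<Longrightarrow> inf a b \<in> G"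
  obtains c where "c \<in> G" "e c = Inf (e ` A)"
  using assms(2,3) that
proof (induction A arbitrary: thesis rule: finite_induct)
  case empty
  then show ?case using assms(4) canonical_extensionD(1)[OF assms(1)] by simp
next
  case (insert a A)
  then obtain c where "c \<in> G" "e c = Inf (e ` A)" by blast
  with insert.prems show ?case
    using assms(5) canonical_extensionD(3)[OF assms(1)] by (metis INF_insert insert_subset)
qed

lemma pi_ext_mono: "u \<le> u' \<Longrightarrow> pi_ext e f u \<le> pi_ext e f u'"
  unfolding pi_ext_def by (rule Inf_superset_mono) auto

lemma pi_ext_le_open:
  assumes "u \<le> Sup (e ` T)"
  shows "pi_ext e f u \<le> Sup (e ` f ` {a. e a \<le> Sup (e ` T)})"
proof -
  have "Sup (e ` f ` {a. e a \<le> Sup (e ` T)}) \<in>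
      {Sup {e (f a) | a. e a \<le> w} | w. w \<in> open_elems e \<and> u \<le> w}"
    using assms unfolding open_elems_def
    by (auto intro!: exI[of _ "Sup (e ` T)"] arg_cong[where f = Sup])
  then show ?thesis
    unfolding pi_ext_def by (rule Inf_lower)
qed

text \<open>For meet-preserving \<open>f\<close>, \<open>{a. k \<le> e (f a)}\<close> is a filter of \<open>L\<close>: the preimage under \<open>f\<close> of the
  filter of elements of \<open>L\<close> above the closed element \<open>k\<close>.\<close>

lemma Inf_filter_le_if_closed_le_pi_ext:
  assumes ce: "canonical_extension e" and "mono f"
    and "k \<in> closed_elems e" and "k \<le> pi_ext e f u"
  shows "Inf (e ` {a. k \<le> e (f a)}) \<le> u"
proof (subst canonical_extensionD(6)[OF ce, of u], rule Inf_greatest, clarify)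
  fix w assume "w \<in> open_elems e" "u \<le> w"
  then obtain T where w: "w = Sup (e ` T)"
    unfolding open_elems_def by auto
  from \<open>k \<in> closed_elems e\<close> obtain S where k: "k = Inf (e ` S)"
    unfolding closed_elems_def by auto
  have "k \<le> Sup (e ` f ` {a. e a \<le> w})"
    using \<open>k \<le> pi_ext e f u\<close> pi_ext_le_open[of u e T f] \<open>u \<le> w\<close> w by (blast intro: order_trans)
  then obtain B where B: "finite B" "B \<subseteq> f ` {a. e a \<le> w}" "k \<le> Sup (e ` B)"
    using canonical_extension_compact_upper[OF ce] k by metis
  then obtain A where A: "finite A" "A \<subseteq> {a. e a \<le> w}" "B = f ` A"
    by (meson finite_subset_image)
  obtain b where b: "e b = Sup (e ` A)"
    using canonical_extension_Sup_finite[OF ce \<open>finite A\<close>] .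
  have "e (f a) \<le> e (f b)" if "a \<in> A" for a
    using that b \<open>mono f\<close> canonical_extension_le_iff[OF ce] by (metis SUP_upper monoD)
  then have "k \<le> e (f b)"
    using A B(3) by (blast intro: order_trans SUP_least)
  then have "Inf (e ` {a. k \<le> e (f a)}) \<le> e b"
    by (simp add: INF_lower)
  also have "e b \<le> w"
    using b A(2) by (auto intro: SUP_least)
  finally show "Inf (e ` {a. k \<le> e (f a)}) \<le> w" .
qed

lemma closed_le_Sup_below_open_if_Inf_filter_le:
  assumes ce: "canonical_extension e"
    and "f top = top" and "\<And>x y. f (inf x y) = inf (f x) (f y)"
    and "w \<in> open_elems e" and "Inf (e ` {a. k \<le> e (f a)}) \<le> w"
  shows "k \<le> Sup {e (f a) | a. e a \<le> w}"
proof -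
  let ?G = "{a. k \<le> e (f a)}"
  obtain T where w: "w = Sup (e ` T)"
    using \<open>w \<in> open_elems e\<close> unfolding open_elems_def by auto
  obtain A where "finite A" "A \<subseteq> ?G" "Inf (e ` A) \<le> w"
    using canonical_extension_compact_lower[OF ce] assms(5) w by metis
  moreover have "top \<in> ?G" and "\<And>a b. a \<in> ?G \<Longrightarrow> b \<in> ?G \<Longrightarrow> inf a b \<in> ?G"
    using assms(2,3) canonical_extensionD(1,3)[OF ce] by simp_all
  ultimately obtain c where "c \<in> ?G" "e c \<le> w"
    using canonical_extension_Inf_finite_in[OF ce] by metis
  then show ?thesis
    by (blast intro: order_trans Sup_upper)
qed

lemma pi_ext_Inf:
  assumes ce: "canonical_extension e"
    and "f top = top" and "\<And>x y. f (inf x y) = inf (f x) (f y)"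
  shows "Inf (pi_ext e f ` U) \<le> pi_ext e f (Inf U)"
proof -
  let ?X = "Inf (pi_ext e f ` U)"
  have "k \<le> Sup {e (f a) | a. e a \<le> w}"
    if "k \<in> closed_elems e" "k \<le> ?X" "w \<in> open_elems e" "Inf U \<le> w" for k w
  proof -
    have "Inf (e ` {a. k \<le> e (f a)}) \<le> u" if "u \<in> U" for u
      using Inf_filter_le_if_closed_le_pi_ext[OF ce mono_if_preserves_inf[OF assms(3)]]
        \<open>k \<in> closed_elems e\<close> \<open>k \<le> ?X\<close> \<open>u \<in> U\<close> by (meson INF_lower order_trans)
    then have "Inf (e ` {a. k \<le> e (f a)}) \<le> w"
      using \<open>Inf U \<le> w\<close> by (blast intro: Inf_greatest order_trans)
    then show ?thesis
      using closed_le_Sup_below_open_if_Inf_filter_le[OF ce assms(2,3) \<open>w \<in> open_elems e\<close>] by blast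
  qed
  then have "Sup {k \<in> closed_elems e. k \<le> ?X} \<le> pi_ext e f (Inf U)"
    unfolding pi_ext_def by (blast intro: Sup_least Inf_greatest)
  then show ?thesis
    using canonical_extensionD(5)[OF ce, of ?X] by simp
qed

theorem mainTheorem4:
  fixes e :: "'b::bounded_lattice \<Rightarrow> 'a::complete_lattice"
    and box dia :: "'b \<Rightarrow> 'b"
    and J M :: "'a set"
    and \<Gamma> \<Delta> :: "ineq list" and A :: trm and j m :: nat
  assumes "L_algebra box dia"
    and "canonical_extension e"
    and "join_generating J"
    and "meet_generating M"
    and "m \<notin> (\<Union>g \<in> set \<Gamma>. ineq_conoms g)"
    and "m \<notin> (\<Union>d \<in> set \<Delta>. ineq_conoms d)"
    and "m \<notin> conoms A"
  shows "seq_valid e box dia J M (\<Gamma> @ [Le A (Conom m)]) (Le (Nom j) (TBox (Conom m)) # \<Delta>)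
     \<longleftrightarrow> seq_valid e box dia J M \<Gamma> (Le (Nom j) (TBox A) # \<Delta>)"
proof -
  have "box top = top" and "\<And>x y. box (inf x y) = inf (box x) (box y)"
    using assms(1) unfolding L_algebra_def by blast+
  then have "\<And>U. Inf (pi_ext e box ` U) \<le> pi_ext e box (Inf U)"
    using pi_ext_Inf[OF assms(2)] by blast
  then have le_pi_ext_iff: "y \<le> pi_ext e box a \<longleftrightarrow> (\<forall>x \<in> M. a \<le> x \<longrightarrow> y \<le> pi_ext e box x)" for y a
    using le_iff_forall_meet_generating_above[OF assms(4)] pi_ext_mono by (metis monoI)
  show ?thesis
    unfolding seq_valid_snoc_fresh_conom_iff[OF assms(5-7)]
    by (simp add: seq_valid_def le_pi_ext_iff[symmetric])
qed

end
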